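(* Let $G$ be a claw-free graph and $C$ an even hole of length $2k$ with $k>2$, labelled $C=\mathbf{b}_0-\mathbf{a}_0-\mathbf{b}_1-\mathbf{a}_1-\dots-\mathbf{b}_{k-1}-\mathbf{a}_{k-1}-\mathbf{b}_0$. Let $\mathbf{s}\notin C$ with $\Gamma_C(\mathbf{s})=\{\mathbf{b}_0,\mathbf{a}_0,\mathbf{b}_1\}$. If a vertex $\mathbf{t}\notin C\cup\{\mathbf{s}\}$ is adjacent to exactly one of $\mathbf{s},\mathbf{a}_0$, then $\mathbf{t}$ is adjacent to exactly one of $\mathbf{b}_0,\mathbf{b}_1$.
   Context: A hole is an induced cycle of length at least 4; an even hole has even length. Claw-free: no induced $K_{1,3}$. $\Gamma_C(\mathbf{s})$ is the set of neighbours of $\mathbf{s}$ in $C$. *)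

theory Defs
  imports Main
begin

definition simple_graph :: "'a set \<Rightarrow> ('a \<Rightarrow> 'a \<Rightarrow> bool) \<Rightarrow> bool" where
  "simple_graph V E \<longleftrightarrow>
     (\<forall>x y. E x y \<longrightarrow> E y x) \<and> (\<forall>x. \<not> E x x) \<and> (\<forall>x y. E x y \<longrightarrow> x \<in> V \<and> y \<in> V)"

definition claw_free :: "'a set \<Rightarrow> ('a \<Rightarrow> 'a \<Rightarrow> bool) \<Rightarrow> bool" where
  "claw_free V E \<longleftrightarrow>
     \<not> (\<exists>x\<in>V. \<exists>y\<in>V. \<exists>z\<in>V. \<exists>w\<in>V.
          distinct [y, z, w] \<and> E x y \<and> E x z \<and> E x w \<and>
          \<not> E y z \<and> \<not> E y w \<and> \<not> E z w)"

definition hole :: "'a set \<Rightarrow> ('a \<Rightarrow> 'a \<Rightarrow> bool) \<Rightarrow> 'a list \<Rightarrow> bool" where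
  "hole V E c \<longleftrightarrow>
     length c \<ge> 4 \<and> distinct c \<and> set c \<subseteq> V \<and>
     (\<forall>i < length c. \<forall>j < length c.
        E (c ! i) (c ! j) \<longleftrightarrow> (j = Suc i mod length c \<or> i = Suc j mod length c))"

end

theory Submission
  imports Defs
begin

text \<open>Write \<open>b\<^sub>0, a\<^sub>0, b\<^sub>1, a\<^sub>1\<close> for \<open>c ! 0, \<dots>, c ! 3\<close> and \<open>a\<^sub>k\<^sub>-\<^sub>1\<close> for the last vertex of \<open>c\<close>.
  Both \<open>s\<close> and \<open>a\<^sub>0\<close> are common neighbours of the nonadjacent \<open>b\<^sub>0\<close>, \<open>b\<^sub>1\<close> that miss
  \<open>a\<^sub>k\<^sub>-\<^sub>1\<close> and \<open>a\<^sub>1\<close>, so the two cases of the theorem are one local statement with the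
  roles of \<open>s\<close> and \<open>a\<^sub>0\<close> exchanged. Say \<open>t\<close> sees \<open>u\<close> but not \<open>w\<close>, where \<open>{u, w} = {s, a\<^sub>0}\<close>.
  If \<open>t\<close> sees neither \<open>b\<^sub>0\<close> nor \<open>b\<^sub>1\<close>, then \<open>u\<close> centres a claw. If \<open>t\<close> sees both, the claws
  at \<open>b\<^sub>0\<close> and \<open>b\<^sub>1\<close> force \<open>t\<close> to see \<open>a\<^sub>k\<^sub>-\<^sub>1\<close> and \<open>a\<^sub>1\<close>, and then \<open>t\<close> centres the claw
  \<open>u, a\<^sub>k\<^sub>-\<^sub>1, a\<^sub>1\<close>; this last step needs \<open>a\<^sub>k\<^sub>-\<^sub>1\<close> and \<open>a\<^sub>1\<close> nonadjacent, i.e. a hole of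
  length at least 6.\<close>

lemma simple_graph_sym: "simple_graph V E \<Longrightarrow> E x y = E y x"
  unfolding simple_graph_def by blast

lemma simple_graph_vertices: "simple_graph V E \<Longrightarrow> E x y \<Longrightarrow> x \<in> V \<and> y \<in> V"
  unfolding simple_graph_def by blast

lemma claw_freeD:
  assumes "simple_graph V E" "claw_free V E"
    and "E x y" "E x z" "E x w" "distinct [y, z, w]"
  shows "E y z \<or> E y w \<or> E z w"
  using assms simple_graph_vertices[OF assms(1)] unfolding claw_free_def by blast

lemma claw_free_common_neighbours:
  assumes G: "simple_graph V E" and cf: "claw_free V E"
    and "E u b\<^sub>0" "E u b\<^sub>1" "E w b\<^sub>0" "E w b\<^sub>1" "\<not> E b\<^sub>0 b\<^sub>1"
    and "E p b\<^sub>0" "\<not> E p b\<^sub>1" "E q b\<^sub>1" "\<not> E q b\<^sub>0" "\<not> E p q"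
    and "\<not> E u p" "\<not> E u q" "\<not> E w p" "\<not> E w q"
    and "E t u" "\<not> E t w" "t \<noteq> w"
  shows "E t b\<^sub>0 \<noteq> E t b\<^sub>1"
proof
  note sym = simple_graph_sym[OF G]
  note claw = claw_freeD[OF G cf]
  assume same: "E t b\<^sub>0 = E t b\<^sub>1"
  have distinct_vertices: "b\<^sub>0 \<noteq> b\<^sub>1" "t \<noteq> b\<^sub>0" "t \<noteq> b\<^sub>1" "p \<noteq> w" "p \<noteq> t" "q \<noteq> w" "q \<noteq> t"
    "u \<noteq> p" "u \<noteq> q" "p \<noteq> q"
    using assms sym by metis+
  show False
  proof (cases "E t b\<^sub>0")
    case False
    then show False
      using claw[of u b\<^sub>0 b\<^sub>1 t] same distinct_vertices assms sym by auto
  next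
    case True
    have "E t p"
      using claw[of b\<^sub>0 p w t] True distinct_vertices assms sym by auto
    moreover have "E t q"
      using claw[of b\<^sub>1 w q t] True same distinct_vertices assms sym by auto
    ultimately show False
      using claw[of t u p q] distinct_vertices assms sym by auto
  qed
qed

lemma hole_nth_adj_iff:
  "hole V E c \<Longrightarrow> i < length c \<Longrightarrow> j < length c \<Longrightarrow>
    E (c ! i) (c ! j) \<longleftrightarrow> (j = Suc i mod length c \<or> i = Suc j mod length c)"
  unfolding hole_def by blast

theorem corollary3:
  fixes V :: "'a set" and E :: "'a \<Rightarrow> 'a \<Rightarrow> bool" and c :: "'a list"
    and k :: nat and s t :: 'a
  assumes "simple_graph V E"
    and "claw_free V E"
    and "hole V E c"
    and "length c = 2 * k"
    and "k > 2"
    and "s \<in> V" and "s \<notin> set c"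
    and "{v \<in> set c. E s v} = {c ! 0, c ! 1, c ! 2}"
    and "t \<in> V" and "t \<notin> set c" and "t \<noteq> s"
    and "E t s \<noteq> E t (c ! 1)"
  shows "E t (c ! 0) \<noteq> E t (c ! 2)"
proof -
  obtain m where len: "length c = Suc m" "m \<ge> 5"
    using assms(4,5) by (intro that[of "2 * k - 1"]) auto
  have path: "E (c ! 1) (c ! 0)" "E (c ! 1) (c ! 2)" "\<not> E (c ! 0) (c ! 2)"
    "E (c ! m) (c ! 0)" "\<not> E (c ! m) (c ! 2)" "E (c ! 3) (c ! 2)" "\<not> E (c ! 3) (c ! 0)"
    "\<not> E (c ! m) (c ! 3)" "\<not> E (c ! 1) (c ! m)" "\<not> E (c ! 1) (c ! 3)"
    using len by (simp_all add: hole_nth_adj_iff[OF assms(3)])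
  have t_neq_a0: "t \<noteq> c ! 1" using assms(10) len by auto
  have "distinct c" using assms(3) unfolding hole_def by blast
  then have "c ! m \<notin> {c ! 0, c ! 1, c ! 2}" "c ! 3 \<notin> {c ! 0, c ! 1, c ! 2}"
    using len by (simp_all add: nth_eq_iff_index_eq)
  moreover have "E s v \<longleftrightarrow> v \<in> {c ! 0, c ! 1, c ! 2}" if "v \<in> set c" for v
    using assms(8) that by blast
  ultimately have s_adj: "E s (c ! 0)" "E s (c ! 2)" "\<not> E s (c ! m)" "\<not> E s (c ! 3)"
    using len by simp_all
  show ?thesis
  proof (cases "E t s")
    case True
    then show ?thesis
      using claw_free_common_neighbours[OF assms(1,2), of s "c ! 0" "c ! 2" "c ! 1" "c ! m" "c ! 3" t]
        path s_adj t_neq_a0 assms(12) by blast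
  next
    case False
    then show ?thesis
      using claw_free_common_neighbours[OF assms(1,2), of "c ! 1" "c ! 0" "c ! 2" s "c ! m" "c ! 3" t]
        path s_adj assms(11,12) simple_graph_sym[OF assms(1), of s] by metis
  qed
qed

end
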